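(* Let $\mathbf f:\mathcal Z\to\mathcal X$ be a $C^2$-diffeomorphism ($\mathcal Z=\mathbb R^{d_z}$, $\mathcal X=\mathbf f(\mathcal Z)\subseteq\mathbb R^{d_x}$). If $\mathbf f$ is additive and sufficiently nonlinear, then $\mathbf f$ has at most first-order interactions across slots, satisfies sufficient independence of order 1, and satisfies interaction asymmetry of order 1 for all equivalent generators.
   Context: Fix a partition $\{B_1,\dots,B_K\}$ of $[d_z]$ into nonempty slots; $\mathbf z_S=(z_i)_{i\in S}$; $D_i\mathbf f(\mathbf z),D^2_{i,i'}\mathbf f(\mathbf z)\in\mathbb R^{d_x}$ are column vectors and $[\cdot]$ is horizontal concatenation. Additive: $\mathbf f(\mathbf z)=\sum_{k=1}^K\mathbf f^k(\mathbf z_{B_k})$ for some $\mathbf f^k:\mathbb R^{|B_k|}\to\mathbb R^{d_x}$ and all $\mathbf z$. Sufficiently nonlinear: with $B^2_{k\le}:=\{(i,i')\in B_k^2:i'\le i\}$, for every $\mathbf z$ the matrix $\mathbf W(\mathbf z):=[[D_i\mathbf f(\mathbf z)]_{i\in B_k}\,[D^2_{i,i'}\mathbf f(\mathbf z)]_{(i,i')\in B^2_{k\le}}]_{k\in[K]}$ has full column rank. At most first-order interaction between $\mathbf z_A,\mathbf z_B$: $D^2_{i,j}\mathbf f(\mathbf z)=\mathbf 0$ for all $\mathbf z$, $i\in A$, $j\in B$; if this fails at some $\mathbf z$, they have second-order interaction at $\mathbf z$. At most first-order interactions across slots: all pairs of distinct slots have at most first-order interaction. Sufficient independence of order 1: for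 all $\mathbf z$, $\mathrm{rank}\big([[D_i\mathbf f(\mathbf z)]_{i\in B_k}\,[D^2_{i,i'}\mathbf f(\mathbf z)]_{(i,i')\in B_k^2}]_{k\in[K]}\big)=\sum_k\big[\mathrm{rank}([D_i\mathbf f(\mathbf z)]_{i\in B_k})+\mathrm{rank}([D^2_{i,i'}\mathbf f(\mathbf z)]_{(i,i')\in B_k^2})\big]$. Interaction asymmetry of order 1: (i) at most first-order interactions across slots on $\mathbb R^{d_z}$; (ii) for every $\mathbf z$, every $k$, and all nonempty $A,B$ with $A\cup B=B_k$, $\mathbf z_A,\mathbf z_B$ have second-order interaction at $\mathbf z$. Equivalent generator: $\bar{\mathbf f}$ with $\bar{\mathbf f}(\mathbf M_1\mathbf z_{B_1},\dots,\mathbf M_K\mathbf z_{B_K})=\mathbf f(\mathbf z)$ for all $\mathbf z$ and some invertible $\mathbf M_k\in\mathbb R^{|B_k|\times|B_k|}$; "for all equivalent generators" means every such $\bar{\mathbf f}$ satisfies interaction asymmetry of order 1. *)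

theory Defs
  imports "HOL-Analysis.Analysis"
begin

text \<open>Latent space R^{d_z} is real^'z, observation space R^{d_x} is real^'x.
  Slots are indexed by a finite type 'k; B k is the slot B_k.\<close>

definition slot_partition :: "('k::finite \<Rightarrow> 'z::finite set) \<Rightarrow> bool" where
  "slot_partition B \<longleftrightarrow> (\<forall>k. B k \<noteq> {}) \<and> (\<forall>k k'. k \<noteq> k' \<longrightarrow> B k \<inter> B k' = {})
      \<and> (\<Union>k. B k) = UNIV"

definition pd :: "(real^'z::finite \<Rightarrow> real^'x::finite) \<Rightarrow> 'z \<Rightarrow> real^'z \<Rightarrow> real^'x" where
  "pd f i z = frechet_derivative f (at z) (axis i 1)"

definition pd2 :: "(real^'z::finite \<Rightarrow> real^'x::finite) \<Rightarrow> 'z \<Rightarrow> 'z \<Rightarrow> real^'z \<Rightarrow> real^'x" where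
  "pd2 f i j z = pd (\<lambda>w. pd f j w) i z"

definition C2 :: "(real^'z::finite \<Rightarrow> real^'x::finite) \<Rightarrow> bool" where
  "C2 f \<longleftrightarrow> (\<forall>z. f differentiable (at z)) \<and> (\<forall>i z. (pd f i) differentiable (at z))
      \<and> (\<forall>i j. continuous_on UNIV (pd2 f i j))"

text \<open>C^2-diffeomorphism of R^{d_z} onto its image X = f(R^{d_z}) \<subseteq> R^{d_x}:
  a C^2 injective immersion that is a homeomorphism onto its image.\<close>
definition C2_diffeo :: "(real^'z::finite \<Rightarrow> real^'x::finite) \<Rightarrow> bool" where
  "C2_diffeo f \<longleftrightarrow> C2 f \<and> inj f \<and> continuous_on (range f) (inv f)
      \<and> (\<forall>z. inj (frechet_derivative f (at z)))"

definition additive :: "('k::finite \<Rightarrow> 'z::finite set) \<Rightarrow> (real^'z \<Rightarrow> real^'x::finite) \<Rightarrow> bool" where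
  "additive B f \<longleftrightarrow> (\<exists>g :: 'k \<Rightarrow> real^'z \<Rightarrow> real^'x.
      (\<forall>k z z'. (\<forall>i\<in>B k. z $ i = z' $ i) \<longrightarrow> g k z = g k z')
      \<and> (\<forall>z. f z = (\<Sum>k\<in>UNIV. g k z)))"

definition col_rank :: "('j \<Rightarrow> real^'x::finite) \<Rightarrow> 'j set \<Rightarrow> nat" where
  "col_rank c J = dim (span (c ` J))"

definition W_cols :: "(real^'z::finite \<Rightarrow> real^'x::finite) \<Rightarrow> real^'z \<Rightarrow> ('z + 'z \<times> 'z) \<Rightarrow> real^'x" where
  "W_cols f z c = (case c of Inl i \<Rightarrow> pd f i z | Inr (i, i') \<Rightarrow> pd2 f i i' z)"

definition W_index :: "('k::finite \<Rightarrow> 'z::{finite,linorder} set) \<Rightarrow> ('z + 'z \<times> 'z) set" where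
  "W_index B = (\<Union>k. Inl ` B k \<union> Inr ` {(i, i'). i \<in> B k \<and> i' \<in> B k \<and> i' \<le> i})"

definition suff_nonlinear :: "('k::finite \<Rightarrow> 'z::{finite,linorder} set) \<Rightarrow> (real^('z::{finite,linorder}) \<Rightarrow> real^'x::finite) \<Rightarrow> bool" where
  "suff_nonlinear B f \<longleftrightarrow> (\<forall>z. col_rank (W_cols f z) (W_index B) = card (W_index B))"

definition at_most_first_order :: "(real^'z::finite \<Rightarrow> real^'x::finite) \<Rightarrow> 'z set \<Rightarrow> 'z set \<Rightarrow> bool" where
  "at_most_first_order f A B' \<longleftrightarrow> (\<forall>z. \<forall>i\<in>A. \<forall>j\<in>B'. pd2 f i j z = 0)"

definition second_order_at :: "(real^'z::finite \<Rightarrow> real^'x::finite) \<Rightarrow> 'z set \<Rightarrow> 'z set \<Rightarrow> real^'z \<Rightarrow> bool" where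
  "second_order_at f A B' z \<longleftrightarrow> (\<exists>i\<in>A. \<exists>j\<in>B'. pd2 f i j z \<noteq> 0)"

definition first_order_across_slots :: "('k::finite \<Rightarrow> 'z::finite set) \<Rightarrow> (real^'z \<Rightarrow> real^'x::finite) \<Rightarrow> bool" where
  "first_order_across_slots B f \<longleftrightarrow> (\<forall>k k'. k \<noteq> k' \<longrightarrow> at_most_first_order f (B k) (B k'))"

definition suff_independent :: "('k::finite \<Rightarrow> 'z::finite set) \<Rightarrow> (real^'z \<Rightarrow> real^'x::finite) \<Rightarrow> bool" where
  "suff_independent B f \<longleftrightarrow> (\<forall>z.
      col_rank (W_cols f z) (\<Union>k. Inl ` B k \<union> Inr ` (B k \<times> B k))
      = (\<Sum>k\<in>UNIV. col_rank (\<lambda>i. pd f i z) (B k)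
                   + col_rank (\<lambda>(i, i'). pd2 f i i' z) (B k \<times> B k)))"

definition interaction_asym :: "('k::finite \<Rightarrow> 'z::finite set) \<Rightarrow> (real^'z \<Rightarrow> real^'x::finite) \<Rightarrow> bool" where
  "interaction_asym B f \<longleftrightarrow> first_order_across_slots B f
     \<and> (\<forall>z k A B'. A \<noteq> {} \<and> B' \<noteq> {} \<and> A \<union> B' = B k \<longrightarrow> second_order_at f A B' z)"

definition block_diag :: "('k::finite \<Rightarrow> 'z::finite set) \<Rightarrow> real^'z^'z \<Rightarrow> bool" where
  "block_diag B M \<longleftrightarrow> (\<forall>i j. (\<not> (\<exists>k. i \<in> B k \<and> j \<in> B k)) \<longrightarrow> M $ i $ j = 0)"

end

theory Submission
  imports Defs
begin

text \<open>Additivity makes each first partial D_j f depend only on the coordinates of the slot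
  containing j, so mixed partials across slots vanish. Sufficient nonlinearity says that the first
  partials together with the lower-triangular within-slot second partials are linearly independent;
  by Schwarz's theorem the remaining Hessian columns repeat these, which gives sufficient
  independence. An equivalent generator is f \<circ> N with N = M^-1 again block diagonal, so its
  cross-slot mixed partials still vanish, while within a slot the chain rule writes D^2_{i,j} (f \<circ> N)
  as a combination of the independent columns D^2_{b,a} f whose coefficients cannot all vanish.\<close>

lemma has_vector_derivative_pd_line:
  fixes f :: "real^'n::finite \<Rightarrow> real^'m::finite"
  assumes "f differentiable (at (q + s *\<^sub>R axis i 1))"
  shows "((\<lambda>s. f (q + s *\<^sub>R axis i 1)) has_vector_derivative pd f i (q + s *\<^sub>R axis i 1)) (at s)"
proof -
  let ?D = "frechet_derivative f (at (q + s *\<^sub>R axis i 1))"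
  have "((\<lambda>s. q + s *\<^sub>R axis i 1) has_derivative (\<lambda>h. h *\<^sub>R axis i 1)) (at s)"
    by (auto intro!: derivative_eq_intros)
  then have "((\<lambda>s. f (q + s *\<^sub>R axis i 1)) has_derivative (\<lambda>h. ?D (h *\<^sub>R axis i 1))) (at s)"
    using has_derivative_compose assms frechet_derivative_works by blast
  moreover have "linear ?D"
    using assms frechet_derivative_works has_derivative_linear by blast
  ultimately show ?thesis
    by (simp add: has_vector_derivative_def pd_def linear_scale)
qed

lemma has_real_derivative_pd_line:
  fixes f :: "real^'n::finite \<Rightarrow> real^'m::finite"
  assumes "f differentiable (at (q + s *\<^sub>R axis i 1))"
  shows "((\<lambda>s. f (q + s *\<^sub>R axis i 1) $ c) has_real_derivative pd f i (q + s *\<^sub>R axis i 1) $ c) (at s)"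
  using bounded_linear.has_vector_derivative[OF bounded_linear_vec_nth has_vector_derivative_pd_line[OF assms]]
  by (simp add: has_real_derivative_iff_has_vector_derivative)

section \<open>Symmetry of mixed partial derivatives\<close>

lemma mixed_difference_mvt:
  fixes f :: "real^'n::finite \<Rightarrow> real^'m::finite"
  assumes diff: "\<And>w. f differentiable (at w)" and diff_pd: "\<And>w. pd f i differentiable (at w)"
    and "t > 0"
  obtains \<sigma> \<tau> where "0 < \<sigma>" "\<sigma> < t" "0 < \<tau>" "\<tau> < t"
    "f (z + t *\<^sub>R axis i 1 + t *\<^sub>R axis j 1) $ c - f (z + t *\<^sub>R axis i 1) $ c
       - f (z + t *\<^sub>R axis j 1) $ c + f z $ c
     = t * t * pd2 f j i (z + \<sigma> *\<^sub>R axis i 1 + \<tau> *\<^sub>R axis j 1) $ c"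
proof -
  define u where "u s = f ((z + t *\<^sub>R axis j 1) + s *\<^sub>R axis i 1) $ c - f (z + s *\<^sub>R axis i 1) $ c" for s
  define v where "v \<sigma> r = pd f i ((z + \<sigma> *\<^sub>R axis i 1) + r *\<^sub>R axis j 1) $ c" for \<sigma> r
  have "(u has_real_derivative v s t - v s 0) (at s)" for s
  proof -
    have "(u has_real_derivative pd f i ((z + t *\<^sub>R axis j 1) + s *\<^sub>R axis i 1) $ c
        - pd f i (z + s *\<^sub>R axis i 1) $ c) (at s)"
      unfolding u_def by (intro DERIV_diff has_real_derivative_pd_line diff)
    then show ?thesis by (simp add: v_def add_ac)
  qed
  then obtain \<sigma> where \<sigma>: "0 < \<sigma>" "\<sigma> < t" and u: "u t - u 0 = t * (v \<sigma> t - v \<sigma> 0)"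
    using MVT2[OF \<open>t > 0\<close>, of u "\<lambda>s. v s t - v s 0"] by auto
  have "(v \<sigma> has_real_derivative pd2 f j i (z + \<sigma> *\<^sub>R axis i 1 + r *\<^sub>R axis j 1) $ c) (at r)" for r
    unfolding v_def pd2_def by (rule has_real_derivative_pd_line[OF diff_pd])
  then obtain \<tau> where \<tau>: "0 < \<tau>" "\<tau> < t"
    and v: "v \<sigma> t - v \<sigma> 0 = t * pd2 f j i (z + \<sigma> *\<^sub>R axis i 1 + \<tau> *\<^sub>R axis j 1) $ c"
    using MVT2[OF \<open>t > 0\<close>, of "v \<sigma>" "\<lambda>r. pd2 f j i (z + \<sigma> *\<^sub>R axis i 1 + r *\<^sub>R axis j 1) $ c"]
    by auto
  have "u t - u 0 = f (z + t *\<^sub>R axis i 1 + t *\<^sub>R axis j 1) $ c - f (z + t *\<^sub>R axis i 1) $ c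
       - f (z + t *\<^sub>R axis j 1) $ c + f z $ c"
    unfolding u_def by (simp add: algebra_simps)
  with u v \<sigma> \<tau> that show thesis by (simp add: mult.assoc)
qed

lemma dist_add_two_axis_less:
  fixes z :: "real^'n::finite"
  assumes "0 < \<sigma>" "\<sigma> < t" "0 < \<tau>" "\<tau> < t"
  shows "dist (z + \<sigma> *\<^sub>R axis i 1 + \<tau> *\<^sub>R axis j 1) z < 2 * t"
proof -
  have "dist (z + \<sigma> *\<^sub>R axis i 1 + \<tau> *\<^sub>R axis j 1) z = norm (\<sigma> *\<^sub>R axis i (1::real) + \<tau> *\<^sub>R axis j 1)"
    by (simp add: dist_norm)
  also have "\<dots> \<le> \<sigma> + \<tau>"
    using norm_triangle_ineq[of "\<sigma> *\<^sub>R axis i (1::real)" "\<tau> *\<^sub>R axis j 1"] assms by simp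
  finally show ?thesis using assms by simp
qed

lemma mixed_partials_agree_nearby:
  fixes f :: "real^'n::finite \<Rightarrow> real^'m::finite"
  assumes diff: "\<And>w. f differentiable (at w)" and diff_pd: "\<And>k w. pd f k differentiable (at w)"
    and "t > 0"
  obtains p q where "dist p z < 2 * t" "dist q z < 2 * t" "pd2 f j i p $ c = pd2 f i j q $ c"
proof -
  obtain \<sigma> \<tau> where st: "0 < \<sigma>" "\<sigma> < t" "0 < \<tau>" "\<tau> < t" and ij:
    "f (z + t *\<^sub>R axis i 1 + t *\<^sub>R axis j 1) $ c - f (z + t *\<^sub>R axis i 1) $ c
       - f (z + t *\<^sub>R axis j 1) $ c + f z $ c
     = t * t * pd2 f j i (z + \<sigma> *\<^sub>R axis i 1 + \<tau> *\<^sub>R axis j 1) $ c"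
    using mixed_difference_mvt[OF diff diff_pd \<open>t > 0\<close>] by blast
  obtain \<sigma>' \<tau>' where st': "0 < \<sigma>'" "\<sigma>' < t" "0 < \<tau>'" "\<tau>' < t" and ji:
    "f (z + t *\<^sub>R axis j 1 + t *\<^sub>R axis i 1) $ c - f (z + t *\<^sub>R axis j 1) $ c
       - f (z + t *\<^sub>R axis i 1) $ c + f z $ c
     = t * t * pd2 f i j (z + \<sigma>' *\<^sub>R axis j 1 + \<tau>' *\<^sub>R axis i 1) $ c"
    using mixed_difference_mvt[OF diff diff_pd \<open>t > 0\<close>] by blast
  have swap: "z + t *\<^sub>R axis j 1 + t *\<^sub>R axis i 1 = z + t *\<^sub>R axis i 1 + t *\<^sub>R axis j 1"
    by (simp add: algebra_simps)
  from ij ji[unfolded swap] have "t * t * pd2 f j i (z + \<sigma> *\<^sub>R axis i 1 + \<tau> *\<^sub>R axis j 1) $ c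
      = t * t * pd2 f i j (z + \<sigma>' *\<^sub>R axis j 1 + \<tau>' *\<^sub>R axis i 1) $ c"
    by linarith
  with \<open>t > 0\<close> have "pd2 f j i (z + \<sigma> *\<^sub>R axis i 1 + \<tau> *\<^sub>R axis j 1) $ c
      = pd2 f i j (z + \<sigma>' *\<^sub>R axis j 1 + \<tau>' *\<^sub>R axis i 1) $ c"
    by simp
  with dist_add_two_axis_less[OF st] dist_add_two_axis_less[OF st'] show thesis
    using that by blast
qed

lemma pd2_commute:
  fixes f :: "real^'n::finite \<Rightarrow> real^'m::finite"
  assumes diff: "\<And>w. f differentiable (at w)" and diff_pd: "\<And>k w. pd f k differentiable (at w)"
    and cont_ij: "continuous_on UNIV (pd2 f i j)" and cont_ji: "continuous_on UNIV (pd2 f j i)"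
  shows "pd2 f i j z = pd2 f j i z"
proof (rule vec_eq_iff[THEN iffD2], rule allI, rule ccontr)
  fix c
  assume "pd2 f i j z $ c \<noteq> pd2 f j i z $ c"
  then have e: "\<bar>pd2 f i j z $ c - pd2 f j i z $ c\<bar> / 2 > 0" (is "?e > 0") by simp
  obtain d1 where "d1 > 0" and d1: "\<And>w. dist w z < d1 \<Longrightarrow> dist (pd2 f i j w) (pd2 f i j z) < ?e"
    using cont_ij e unfolding continuous_on_iff by blast
  obtain d2 where "d2 > 0" and d2: "\<And>w. dist w z < d2 \<Longrightarrow> dist (pd2 f j i w) (pd2 f j i z) < ?e"
    using cont_ji e unfolding continuous_on_iff by blast
  obtain p q where "dist p z < min d1 d2" "dist q z < min d1 d2"
    and pq: "pd2 f j i p $ c = pd2 f i j q $ c"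
    using mixed_partials_agree_nearby[OF diff diff_pd, of "min d1 d2 / 2" z j i c]
      \<open>d1 > 0\<close> \<open>d2 > 0\<close> by auto
  then have p: "dist p z < d2" and q: "dist q z < d1" by simp_all
  have "dist (pd2 f j i p $ c) (pd2 f j i z $ c) < ?e"
    by (rule le_less_trans[OF dist_vec_nth_le d2[OF p]])
  moreover have "dist (pd2 f i j q $ c) (pd2 f i j z $ c) < ?e"
    by (rule le_less_trans[OF dist_vec_nth_le d1[OF q]])
  ultimately have "\<bar>pd2 f i j q $ c - pd2 f j i z $ c\<bar> < ?e" "\<bar>pd2 f i j q $ c - pd2 f i j z $ c\<bar> < ?e"
    using pq unfolding dist_real_def by simp_all
  then show False by (auto simp: abs_if split: if_split_asm)
qed

section \<open>Additive generators\<close>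

lemma pd_eq_if_increments_eq:
  fixes f :: "real^'n::finite \<Rightarrow> real^'m::finite"
  assumes "f differentiable (at z)" "f differentiable (at z')"
    and incr: "\<And>s. f (z + s *\<^sub>R axis j 1) - f z = f (z' + s *\<^sub>R axis j 1) - f z'"
  shows "pd f j z = pd f j z'"
proof -
  have shift: "(\<lambda>s. f (z + s *\<^sub>R axis j 1)) = (\<lambda>s. f (z' + s *\<^sub>R axis j 1) + (f z - f z'))"
  proof
    fix s
    show "f (z + s *\<^sub>R axis j 1) = f (z' + s *\<^sub>R axis j 1) + (f z - f z')"
      using incr[of s] by (simp add: algebra_simps)
  qed
  have "((\<lambda>s. f (z + s *\<^sub>R axis j 1)) has_vector_derivative pd f j z) (at 0)"
    using has_vector_derivative_pd_line[of f z 0 j] assms(1) by simp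
  moreover have "((\<lambda>s. f (z' + s *\<^sub>R axis j 1)) has_vector_derivative pd f j z') (at 0)"
    using has_vector_derivative_pd_line[of f z' 0 j] assms(2) by simp
  then have "((\<lambda>s. f (z + s *\<^sub>R axis j 1)) has_vector_derivative pd f j z') (at 0)"
    unfolding shift by (simp only: has_vector_derivative_add_const)
  ultimately show ?thesis by (rule vector_derivative_unique_at)
qed

lemma slot_partition_unique:
  assumes "slot_partition B" "i \<in> B k" "i \<in> B k'"
  shows "k = k'"
  using assms unfolding slot_partition_def by blast

lemma slot_partition_obtain:
  assumes "slot_partition B"
  obtains k where "i \<in> B k"
  using assms unfolding slot_partition_def by blast

lemma additive_increment_eq:
  fixes f :: "real^'n::finite \<Rightarrow> real^'m::finite" and B :: "'k::finite \<Rightarrow> 'n set"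
  assumes part: "slot_partition B" and add: "additive B f"
    and j: "j \<in> B k" and agree: "\<forall>l\<in>B k. z $ l = z' $ l"
  shows "f (z + s *\<^sub>R axis j 1) - f z = f (z' + s *\<^sub>R axis j 1) - f z'"
proof -
  obtain g :: "'k \<Rightarrow> real^'n \<Rightarrow> real^'m" where
    local: "\<And>k z z'. \<forall>i\<in>B k. z $ i = z' $ i \<Longrightarrow> g k z = g k z'" and
    sum: "\<And>z. f z = (\<Sum>k\<in>UNIV. g k z)"
    using add unfolding additive_def by blast
  have incr: "f (w + s *\<^sub>R axis j 1) - f w = g k (w + s *\<^sub>R axis j 1) - g k w" for w
  proof -
    have "g k' (w + s *\<^sub>R axis j 1) - g k' w = 0" if "k' \<noteq> k" for k'
    proof -
      have "j \<notin> B k'" using slot_partition_unique[OF part j] that by blast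
      then show ?thesis by (auto intro!: local simp: axis_def)
    qed
    then have "(\<Sum>k'\<in>UNIV. g k' (w + s *\<^sub>R axis j 1) - g k' w) = g k (w + s *\<^sub>R axis j 1) - g k w"
      by (subst sum.remove[of UNIV k]) (auto intro!: sum.neutral)
    then show ?thesis by (simp add: sum sum_subtractf)
  qed
  have "g k (z + s *\<^sub>R axis j 1) = g k (z' + s *\<^sub>R axis j 1)" "g k z = g k z'"
    using agree by (auto intro!: local simp: axis_def)
  then show ?thesis by (simp add: incr)
qed

lemma first_order_across_slots_if_additive:
  fixes f :: "real^'n::finite \<Rightarrow> real^'m::finite" and B :: "'k::finite \<Rightarrow> 'n set"
  assumes part: "slot_partition B" and add: "additive B f"
    and diff: "\<And>w. f differentiable (at w)" and diff_pd: "\<And>k w. pd f k differentiable (at w)"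
  shows "first_order_across_slots B f"
  unfolding first_order_across_slots_def at_most_first_order_def
proof (intro allI impI ballI)
  fix k k' z i j
  assume "k \<noteq> k'" and i: "i \<in> B k" and j: "j \<in> B k'"
  then have "i \<notin> B k'" using slot_partition_unique[OF part] by blast
  then have "pd f j (z + s *\<^sub>R axis i 1) = pd f j z" for s
    using diff by (intro pd_eq_if_increments_eq additive_increment_eq[OF part add j]) (auto simp: axis_def)
  then have "((\<lambda>s. pd f j (z + s *\<^sub>R axis i 1)) has_vector_derivative 0) (at 0)"
    by simp
  with has_vector_derivative_pd_line[of "pd f j" z 0 i] diff_pd
  show "pd2 f i j z = 0" by (simp add: pd2_def vector_derivative_unique_at)
qed

section \<open>Sufficient independence\<close>

lemma inj_on_independent_if_dim_span_eq_card:
  fixes W :: "'j \<Rightarrow> 'a::euclidean_space"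
  assumes fin: "finite J" and dim: "dim (span (W ` J)) = card J"
  shows "inj_on W J" "independent (W ` J)"
proof -
  have "card J = dim (W ` J)" using dim by (simp add: dim_span)
  also have "\<dots> \<le> card (W ` J)" using fin by (simp add: dim_le_card')
  finally have card: "card (W ` J) = card J"
    using card_image_le[OF fin, of W] by linarith
  then show "inj_on W J" using fin eq_card_imp_inj_on by blast
  show "independent (W ` J)"
    using card_eq_dim[of "W ` J" "W ` J"] card dim fin by (simp add: dim_span span_superset)
qed

lemma dim_span_image_eq_card:
  fixes W :: "'j \<Rightarrow> 'a::euclidean_space"
  assumes "inj_on W J" "independent (W ` J)" "Y \<subseteq> J"
  shows "dim (span (W ` Y)) = card Y"
proof -
  have "independent (W ` Y)" using assms independent_mono image_mono by metis
  then have "dim (span (W ` Y)) = card (W ` Y)" by (rule dim_span_eq_card_independent)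
  also have "\<dots> = card Y" using assms card_image inj_on_subset by metis
  finally show ?thesis .
qed

lemma image_lower_triangle_eq:
  fixes h :: "'a::linorder \<times> 'a \<Rightarrow> 'b"
  assumes sym: "\<And>i i'. h (i, i') = h (i', i)"
  shows "h ` {(i, i'). i \<in> S \<and> i' \<in> S \<and> i' \<le> i} = h ` (S \<times> S)"
proof
  show "h ` (S \<times> S) \<subseteq> h ` {(i, i'). i \<in> S \<and> i' \<in> S \<and> i' \<le> i}"
  proof clarify
    fix i i' assume "i \<in> S" "i' \<in> S"
    then have "(i, i') \<in> {(i, i'). i \<in> S \<and> i' \<in> S \<and> i' \<le> i}
        \<or> (i', i) \<in> {(i, i'). i \<in> S \<and> i' \<in> S \<and> i' \<le> i}"
      by auto
    then show "h (i, i') \<in> h ` {(i, i'). i \<in> S \<and> i' \<in> S \<and> i' \<le> i}"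
      using sym[of i i'] by blast
  qed
qed auto

lemma suff_nonlinear_columns_independent:
  assumes "suff_nonlinear B f"
  shows "inj_on (W_cols f z) (W_index B)" "independent (W_cols f z ` W_index B)"
  using inj_on_independent_if_dim_span_eq_card[of "W_index B" "W_cols f z"] assms
  unfolding suff_nonlinear_def col_rank_def by auto

lemma suff_independent_if_suff_nonlinear:
  fixes f :: "real^('n::{finite,linorder}) \<Rightarrow> real^'m::finite" and B :: "'k::finite \<Rightarrow> 'n set"
  assumes part: "slot_partition B" and sym: "\<And>i i' z. pd2 f i i' z = pd2 f i' i z"
    and nonlin: "suff_nonlinear B f"
  shows "suff_independent B f"
  unfolding suff_independent_def
proof
  fix z
  define W where "W = W_cols f z"
  define H where "H = (\<lambda>(i, i'). pd2 f i i' z)"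
  define L where "L k = {(i, i'). i \<in> B k \<and> i' \<in> B k \<and> i' \<le> i}" for k
  have index: "W_index B = (\<Union>k. Inl ` B k \<union> Inr ` L k)"
    unfolding W_index_def L_def ..
  have rank: "dim (span (W ` Y)) = card Y" if "Y \<subseteq> W_index B" for Y
    using dim_span_image_eq_card[OF suff_nonlinear_columns_independent[OF nonlin] that]
    unfolding W_def .
  have W_Inl: "W ` Inl ` S = (\<lambda>i. pd f i z) ` S" and W_Inr: "W ` Inr ` T = H ` T" for S T
    by (auto simp: W_def H_def W_cols_def image_image split: prod.splits)
  have H_L: "H ` L k = H ` (B k \<times> B k)" for k
    unfolding L_def by (rule image_lower_triangle_eq) (simp add: H_def sym)
  have "col_rank W (\<Union>k. Inl ` B k \<union> Inr ` (B k \<times> B k)) = col_rank W (W_index B)"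
    unfolding col_rank_def index image_UN image_Un W_Inl W_Inr H_L ..
  also have "\<dots> = (\<Sum>k\<in>UNIV. card (Inl ` B k \<union> Inr ` L k))"
    unfolding col_rank_def using rank[of "W_index B"] part
    by (simp add: index, subst card_UN_disjoint) (auto simp: slot_partition_def L_def)
  also have "\<dots> = (\<Sum>k\<in>UNIV. col_rank (\<lambda>i. pd f i z) (B k) + col_rank H (B k \<times> B k))"
  proof (rule sum.cong)
    fix k
    have "Inl ` B k \<subseteq> W_index B" "Inr ` L k \<subseteq> W_index B" unfolding index by blast+
    from rank[OF this(1)] rank[OF this(2)]
    have "col_rank (\<lambda>i. pd f i z) (B k) = card (Inl ` B k :: ('n + 'n \<times> 'n) set)"
      and "col_rank H (B k \<times> B k) = card (Inr ` L k :: ('n + 'n \<times> 'n) set)"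
      unfolding col_rank_def W_Inl W_Inr H_L .
    then show "card (Inl ` B k \<union> Inr ` L k) = col_rank (\<lambda>i. pd f i z) (B k) + col_rank H (B k \<times> B k)"
      by (subst card_Un_disjoint) auto
  qed simp
  finally show "col_rank (W_cols f z) (\<Union>k. Inl ` B k \<union> Inr ` (B k \<times> B k))
      = (\<Sum>k\<in>UNIV. col_rank (\<lambda>i. pd f i z) (B k) + col_rank (\<lambda>(i, i'). pd2 f i i' z) (B k \<times> B k))"
    unfolding W_def H_def .
qed

section \<open>Equivalent generators\<close>

lemma pd_comp_matrix:
  fixes g :: "real^'n::finite \<Rightarrow> real^'m::finite" and N :: "real^'n^'n"
  assumes "g differentiable (at (N *v w))"
  shows "pd (\<lambda>w. g (N *v w)) i w = (\<Sum>b\<in>UNIV. N $ b $ i *\<^sub>R pd g b (N *v w))"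
proof -
  let ?D = "frechet_derivative g (at (N *v w))"
  have lin: "linear ?D"
    using assms frechet_derivative_works has_derivative_linear by blast
  have "((\<lambda>w. N *v w) has_derivative (\<lambda>h. N *v h)) (at w)"
    by (rule bounded_linear_imp_has_derivative[OF matrix_vector_mul_bounded_linear])
  then have "((\<lambda>w. g (N *v w)) has_derivative (\<lambda>h. ?D (N *v h))) (at w)"
    using has_derivative_compose assms frechet_derivative_works by blast
  then have "pd (\<lambda>w. g (N *v w)) i w = ?D (N *v axis i 1)"
    unfolding pd_def by (simp flip: frechet_derivative_at)
  also have "N *v axis i 1 = (\<Sum>b\<in>UNIV. N $ b $ i *\<^sub>R axis b 1)"
    using basis_expansion[of "column i N"]
    by (simp add: matrix_vector_mult_basis column_def scalar_mult_eq_scaleR)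
  also have "?D \<dots> = (\<Sum>b\<in>UNIV. N $ b $ i *\<^sub>R pd g b (N *v w))"
    using lin by (simp add: pd_def linear_sum linear_scale)
  finally show ?thesis .
qed

lemma pd_sum_scaleR:
  fixes G :: "'a \<Rightarrow> real^'n::finite \<Rightarrow> real^'m::finite"
  assumes "finite A" and "\<And>a. G a differentiable (at w)"
  shows "pd (\<lambda>w. \<Sum>a\<in>A. c a *\<^sub>R G a w) i w = (\<Sum>a\<in>A. c a *\<^sub>R pd (G a) i w)"
proof -
  have "((\<lambda>w. \<Sum>a\<in>A. c a *\<^sub>R G a w)
      has_derivative (\<lambda>h. \<Sum>a\<in>A. c a *\<^sub>R frechet_derivative (G a) (at w) h)) (at w)"
    using assms frechet_derivative_works
    by (intro has_derivative_sum has_derivative_scaleR_right) blast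
  then show ?thesis unfolding pd_def by (simp flip: frechet_derivative_at)
qed

lemma pd2_comp_matrix:
  fixes f :: "real^'n::finite \<Rightarrow> real^'m::finite" and N :: "real^'n^'n"
  assumes diff: "\<And>w. f differentiable (at w)" and diff_pd: "\<And>k w. pd f k differentiable (at w)"
  shows "pd2 (\<lambda>w. f (N *v w)) i j w
    = (\<Sum>a\<in>UNIV. N $ a $ j *\<^sub>R (\<Sum>b\<in>UNIV. N $ b $ i *\<^sub>R pd2 f b a (N *v w)))"
proof -
  have "pd (\<lambda>w. f (N *v w)) j = (\<lambda>w. \<Sum>a\<in>UNIV. N $ a $ j *\<^sub>R pd f a (N *v w))"
    using pd_comp_matrix diff by blast
  moreover have "(\<lambda>w. pd f a (N *v w)) differentiable (at w)" for a
    using differentiable_chain_at[OF bounded_linear_imp_differentiable[OF matrix_vector_mul_bounded_linear]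
      diff_pd] by (simp add: o_def)
  ultimately have "pd2 (\<lambda>w. f (N *v w)) i j w = (\<Sum>a\<in>UNIV. N $ a $ j *\<^sub>R pd (\<lambda>w. pd f a (N *v w)) i w)"
    unfolding pd2_def by (simp add: pd_sum_scaleR)
  also have "\<dots> = (\<Sum>a\<in>UNIV. N $ a $ j *\<^sub>R (\<Sum>b\<in>UNIV. N $ b $ i *\<^sub>R pd2 f b a (N *v w)))"
    using pd_comp_matrix[OF diff_pd] by (simp add: pd2_def)
  finally show ?thesis .
qed

definition restrict_slot :: "'n set \<Rightarrow> real^'n::finite \<Rightarrow> real^'n" where
  "restrict_slot S x = (\<chi> d. if d \<in> S then x $ d else 0)"

lemma block_diag_entry_eq_0:
  assumes "block_diag B M" "slot_partition B" "(i \<in> B k) \<noteq> (j \<in> B k)"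
  shows "M $ i $ j = 0"
proof -
  have "\<not> (\<exists>k'. i \<in> B k' \<and> j \<in> B k')"
    using slot_partition_unique[OF assms(2)] assms(3) by blast
  then show ?thesis using assms(1) unfolding block_diag_def by blast
qed

lemma block_diag_mult_restrict_slot:
  fixes M :: "real^'n::finite^'n"
  assumes bd: "block_diag B M" and part: "slot_partition B"
  shows "M *v restrict_slot (B k) x = restrict_slot (B k) (M *v x)"
proof -
  have "M $ c $ d * (if d \<in> B k then x $ d else 0) = (if c \<in> B k then M $ c $ d * x $ d else 0)" for c d
    using block_diag_entry_eq_0[OF bd part, of c k d]
    by (cases "c \<in> B k"; cases "d \<in> B k") simp_all
  then show ?thesis
    by (simp add: vec_eq_iff restrict_slot_def matrix_vector_mult_def)
qed

lemma block_diag_inverse: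
  fixes M N :: "real^'n::finite^'n"
  assumes part: "slot_partition B" and bd: "block_diag B M"
    and MN: "M ** N = mat 1" and NM: "N ** M = mat 1"
  shows "block_diag B N"
  unfolding block_diag_def
proof (intro allI impI)
  fix a j
  assume apart: "\<not> (\<exists>k. a \<in> B k \<and> j \<in> B k)"
  obtain k where a: "a \<in> B k" using slot_partition_obtain[OF part] by blast
  define u where "u = restrict_slot (B k) (N *v axis j 1)"
  have "M *v u = restrict_slot (B k) (axis j 1)"
    unfolding u_def block_diag_mult_restrict_slot[OF bd part] matrix_vector_mul_assoc MN by simp
  also have "\<dots> = 0"
    using apart a by (auto simp: restrict_slot_def vec_eq_iff axis_def)
  finally have "u = 0"
    using matrix_vector_mul_assoc[of N M u] NM by simp
  then have "u $ a = 0" by simp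
  then show "N $ a $ j = 0"
    using a by (simp add: u_def restrict_slot_def matrix_vector_mult_basis column_def)
qed

lemma first_order_across_slots_comp_matrix:
  fixes f :: "real^'n::finite \<Rightarrow> real^'m::finite" and N :: "real^'n^'n"
  assumes part: "slot_partition B"
    and diff: "\<And>w. f differentiable (at w)" and diff_pd: "\<And>k w. pd f k differentiable (at w)"
    and first_order: "first_order_across_slots B f" and bd: "block_diag B N"
  shows "first_order_across_slots B (\<lambda>w. f (N *v w))"
  unfolding first_order_across_slots_def at_most_first_order_def
proof (intro allI impI ballI)
  fix k k' z i j
  assume "k \<noteq> k'" and i: "i \<in> B k" and j: "j \<in> B k'"
  have term_zero: "(N $ a $ j * N $ b $ i) *\<^sub>R pd2 f b a (N *v z) = 0" for a b
  proof (cases "a \<in> B k' \<and> b \<in> B k")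
    case True
    with \<open>k \<noteq> k'\<close> have "pd2 f b a (N *v z) = 0"
      using first_order unfolding first_order_across_slots_def at_most_first_order_def by simp
    then show ?thesis by simp
  next
    case False
    then show ?thesis
      using block_diag_entry_eq_0[OF bd part, of a k' j] block_diag_entry_eq_0[OF bd part, of b k i] i j
      by auto
  qed
  then show "pd2 (\<lambda>w. f (N *v w)) i j z = 0"
    by (simp add: pd2_comp_matrix[OF diff diff_pd] scaleR_sum_right term_zero)
qed

lemma independent_obtain_linear_functional:
  fixes W :: "'j \<Rightarrow> 'a::euclidean_space" and val :: "'j \<Rightarrow> real"
  assumes "inj_on W J" "independent (W ` J)"
  obtains \<phi> :: "'a \<Rightarrow> real" where "linear \<phi>" "\<And>c. c \<in> J \<Longrightarrow> \<phi> (W c) = val c"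
proof -
  obtain \<phi> :: "'a \<Rightarrow> real" where lin: "linear \<phi>" and \<phi>: "\<forall>v\<in>W ` J. \<phi> v = val (inv_into J W v)"
    using linear_independent_extend[OF assms(2), of "\<lambda>v. val (inv_into J W v)"] by blast
  show thesis
  proof (rule that[OF lin])
    fix c assume "c \<in> J"
    then show "\<phi> (W c) = val c" using \<phi> inv_into_f_f[OF assms(1)] by simp
  qed
qed

lemma sum_sum_symmetrized_product:
  fixes x y g h :: "'a \<Rightarrow> real"
  shows "(\<Sum>a\<in>A. x a * (\<Sum>b\<in>A. y b * (g b * h a + g a * h b)))
       = (\<Sum>a\<in>A. x a * h a) * (\<Sum>b\<in>A. y b * g b) + (\<Sum>a\<in>A. x a * g a) * (\<Sum>b\<in>A. y b * h b)"
proof -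
  have "(\<Sum>a\<in>A. x a * (\<Sum>b\<in>A. y b * (g b * h a + g a * h b)))
      = (\<Sum>a\<in>A. \<Sum>b\<in>A. (x a * h a) * (y b * g b)) + (\<Sum>a\<in>A. \<Sum>b\<in>A. (x a * g a) * (y b * h b))"
    by (simp add: sum_distrib_left sum.distrib algebra_simps)
  then show ?thesis by (simp add: sum_product)
qed

lemma suff_nonlinear_obtain_hessian_functional:
  fixes f :: "real^('n::{finite,linorder}) \<Rightarrow> real^'m::finite" and B :: "'k::finite \<Rightarrow> 'n set"
  assumes part: "slot_partition B" and sym: "\<And>i i' z. pd2 f i i' z = pd2 f i' i z"
    and first_order: "first_order_across_slots B f" and nonlin: "suff_nonlinear B f"
    and g: "\<And>b. b \<notin> B k \<Longrightarrow> g b = 0" and h: "\<And>a. a \<notin> B k \<Longrightarrow> h a = 0"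
  obtains \<phi> :: "real^'m \<Rightarrow> real"
  where "linear \<phi>" "\<And>a b. \<phi> (pd2 f b a w) = g b * h a + g a * h b"
proof -
  define W where "W = W_cols f w"
  define val :: "'n + 'n \<times> 'n \<Rightarrow> real"
    where "val c = (case c of Inl _ \<Rightarrow> 0 | Inr (b, a) \<Rightarrow> g b * h a + g a * h b)" for c
  obtain \<phi> :: "real^'m \<Rightarrow> real" where lin: "linear \<phi>"
    and \<phi>: "\<And>c. c \<in> W_index B \<Longrightarrow> \<phi> (W c) = val c"
    using independent_obtain_linear_functional[OF suff_nonlinear_columns_independent[OF nonlin]]
    unfolding W_def by blast
  have "\<phi> (pd2 f b a w) = g b * h a + g a * h b" for a b
  proof -
    obtain ka kb where a: "a \<in> B ka" and b: "b \<in> B kb"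
      using slot_partition_obtain[OF part] by metis
    consider "ka = kb" "a \<le> b" | "ka = kb" "b \<le> a" | "ka \<noteq> kb"
      using linear by blast
    then show ?thesis
    proof cases
      case 1
      then have "Inr (b, a) \<in> W_index B" using a b unfolding W_index_def by blast
      from \<phi>[OF this] show ?thesis by (simp add: W_def W_cols_def val_def)
    next
      case 2
      then have "Inr (a, b) \<in> W_index B" using a b unfolding W_index_def by blast
      from \<phi>[OF this] show ?thesis by (simp add: W_def W_cols_def val_def sym[of b a] add.commute)
    next
      case 3
      then have "at_most_first_order f (B kb) (B ka)"
        using first_order unfolding first_order_across_slots_def by simp
      then have "pd2 f b a w = 0"
        using a b unfolding at_most_first_order_def by blast
      moreover have "g b * h a = 0" "g a * h b = 0"
        using 3 a b slot_partition_unique[OF part] g h by (metis mult_eq_0_iff)+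
      ultimately show ?thesis using lin by (auto simp: linear_0)
    qed
  qed
  then show thesis by (rule that[OF lin])
qed

lemma pd2_comp_matrix_within_slot_neq_0:
  fixes f :: "real^('n::{finite,linorder}) \<Rightarrow> real^'m::finite" and B :: "'k::finite \<Rightarrow> 'n set"
  assumes part: "slot_partition B"
    and diff: "\<And>w. f differentiable (at w)" and diff_pd: "\<And>k w. pd f k differentiable (at w)"
    and sym: "\<And>i i' z. pd2 f i i' z = pd2 f i' i z"
    and first_order: "first_order_across_slots B f" and nonlin: "suff_nonlinear B f"
    and bd: "block_diag B M" and MN: "M ** N = mat 1"
    and i: "i \<in> B k" and j: "j \<in> B k"
  shows "pd2 (\<lambda>w. f (N *v w)) i j z \<noteq> 0"
proof
  assume zero: "pd2 (\<lambda>w. f (N *v w)) i j z = 0"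
  define g where "g b = M $ i $ b" for b
  define h where "h a = M $ j $ a" for a
  have "g b = 0" if "b \<notin> B k" for b
    using block_diag_entry_eq_0[OF bd part, of i k b] i that unfolding g_def by simp
  moreover have "h a = 0" if "a \<notin> B k" for a
    using block_diag_entry_eq_0[OF bd part, of j k a] j that unfolding h_def by simp
  ultimately obtain \<phi> :: "real^'m \<Rightarrow> real"
    where lin: "linear \<phi>" and \<phi>: "\<And>a b. \<phi> (pd2 f b a (N *v z)) = g b * h a + g a * h b"
    by (metis suff_nonlinear_obtain_hessian_functional[OF part sym first_order nonlin, where w = "N *v z"])
  have MN_entry: "(\<Sum>b\<in>UNIV. N $ b $ q * M $ p $ b) = (if p = q then 1 else 0)" for p q
    using MN by (simp add: matrix_matrix_mult_def mat_def vec_eq_iff mult.commute)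
  (* Rows i and j of M = N^-1 turn the chain-rule expansion of D^2_{i,j} (f \<circ> N) into
     (MN)_ii (MN)_jj + (MN)_ij (MN)_ji = 1 + [i = j]. *)
  have "\<phi> (pd2 (\<lambda>w. f (N *v w)) i j z)
      = (\<Sum>a\<in>UNIV. N $ a $ j * (\<Sum>b\<in>UNIV. N $ b $ i * (g b * h a + g a * h b)))"
    using lin unfolding pd2_comp_matrix[OF diff diff_pd]
    by (simp add: linear_sum linear_scale \<phi> sum_distrib_left mult.assoc)
  also have "\<dots> = 1 + (if i = j then 1 else 0)"
    unfolding sum_sum_symmetrized_product g_def h_def MN_entry by simp
  finally show False using zero lin by (simp add: linear_0 split: if_splits)
qed

lemma interaction_asym_if_equivalent_generator:
  fixes f fb :: "real^('n::{finite,linorder}) \<Rightarrow> real^'m::finite"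
    and B :: "'k::finite \<Rightarrow> 'n set"
  assumes part: "slot_partition B"
    and diff: "\<And>w. f differentiable (at w)" and diff_pd: "\<And>k w. pd f k differentiable (at w)"
    and sym: "\<And>i i' z. pd2 f i i' z = pd2 f i' i z"
    and first_order: "first_order_across_slots B f" and nonlin: "suff_nonlinear B f"
    and bd: "block_diag B M" and "invertible M" and equiv: "\<And>z. fb (M *v z) = f z"
  shows "interaction_asym B fb"
proof -
  obtain N where MN: "M ** N = mat 1" and NM: "N ** M = mat 1"
    using \<open>invertible M\<close> unfolding invertible_def by blast
  have fb: "fb = (\<lambda>w. f (N *v w))"
  proof
    fix w
    show "fb w = f (N *v w)" using equiv[of "N *v w"] by (simp add: matrix_vector_mul_assoc MN)
  qed
  have "first_order_across_slots B fb"
    unfolding fb using first_order_across_slots_comp_matrix[OF part diff diff_pd first_order]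
      block_diag_inverse[OF part bd MN NM] .
  moreover have "second_order_at fb A A' z"
    if "A \<noteq> {}" "A' \<noteq> {}" and slot: "A \<union> A' = B k" for z k A A'
  proof -
    obtain i j where ij: "i \<in> A" "j \<in> A'" using \<open>A \<noteq> {}\<close> \<open>A' \<noteq> {}\<close> by blast
    then have "pd2 fb i j z \<noteq> 0"
      unfolding fb using slot
      by (intro pd2_comp_matrix_within_slot_neq_0[OF part diff diff_pd sym first_order nonlin bd MN]) blast+
    with ij show ?thesis unfolding second_order_at_def by blast
  qed
  ultimately show ?thesis unfolding interaction_asym_def by blast
qed

theorem mainTheorem10:
  fixes f :: "real^('z::{finite,linorder}) \<Rightarrow> real^'x::finite"
    and B :: "'k::finite \<Rightarrow> 'z set"
  assumes "slot_partition B"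
    and "C2_diffeo f"
    and "additive B f"
    and "suff_nonlinear B f"
  shows "first_order_across_slots B f
    \<and> suff_independent B f
    \<and> (\<forall>(fb :: real^('z::{finite,linorder}) \<Rightarrow> real^'x) (M :: real^('z::{finite,linorder})^('z::{finite,linorder})).
          block_diag B M \<and> invertible M \<and> (\<forall>z. fb (M *v z) = f z)
          \<longrightarrow> interaction_asym B fb)"
proof -
  have C2: "C2 f" using assms(2) unfolding C2_diffeo_def by blast
  then have diff: "\<And>w. f differentiable (at w)" and diff_pd: "\<And>k w. pd f k differentiable (at w)"
    unfolding C2_def by blast+
  have sym: "\<And>i i' z. pd2 f i i' z = pd2 f i' i z"
    using C2 pd2_commute[OF diff diff_pd] unfolding C2_def by blast
  have first_order: "first_order_across_slots B f"
    using first_order_across_slots_if_additive[OF assms(1,3) diff diff_pd] .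
  moreover have "suff_independent B f"
    using suff_independent_if_suff_nonlinear[OF assms(1) sym assms(4)] .
  moreover have "interaction_asym B fb"
    if "block_diag B M \<and> invertible M \<and> (\<forall>z. fb (M *v z) = f z)" for fb M
    using that interaction_asym_if_equivalent_generator[OF assms(1) diff diff_pd sym first_order assms(4)]
    by blast
  ultimately show ?thesis by blast
qed

end
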